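(* Let $X \subseteq \mathbb{Z}^2$ be finite, full-dimensional and lattice-convex. Then $H(X) \le \mathrm{rc}(X) \le H(X) + 1$.
   Context: $X$ is lattice-convex if $\mathrm{conv}(X)\cap\mathbb{Z}^2 = X$. $\mathrm{rc}(X)$ is the smallest number of facets of a polyhedron $P$ with $P\cap\mathbb{Z}^2 = X$. A hiding set for $X$ is a set $H \subseteq (\mathrm{aff}(X)\cap\mathbb{Z}^2)\setminus X$ such that $\mathrm{conv}(\{x,y\})\cap\mathrm{conv}(X)\ne\emptyset$ for all distinct $x,y\in H$; $H(X)$ is the maximum cardinality of a hiding set for $X$. *)

theory Defs
  imports "HOL-Analysis.Analysis" "HOL-Library.Extended_Nat"
begin

definition lattice2 :: "(real^2) set" where
  "lattice2 = {x. \<forall>i. x $ i \<in> \<int>}"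

definition lattice_convex :: "(real^2) set \<Rightarrow> bool" where
  "lattice_convex X \<longleftrightarrow> convex hull X \<inter> lattice2 = X"

definition rc :: "(real^2) set \<Rightarrow> nat" where
  "rc X = (LEAST k. \<exists>P. polyhedron P \<and> P \<inter> lattice2 = X \<and> card {F. F facet_of P} = k)"

definition hiding_set :: "(real^2) set \<Rightarrow> (real^2) set \<Rightarrow> bool" where
  "hiding_set X H \<longleftrightarrow> H \<subseteq> (affine hull X \<inter> lattice2) - X \<and>
     (\<forall>x\<in>H. \<forall>y\<in>H. x \<noteq> y \<longrightarrow> closed_segment x y \<inter> convex hull X \<noteq> {})"

definition hiding_number :: "(real^2) set \<Rightarrow> enat" where
  "hiding_number X = (SUP H\<in>{H. hiding_set X H}. if finite H then enat (card H) else \<infinity>)"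

end

theory Submission
  imports Defs
begin

text \<open>
  Let \<open>P\<close> be a polyhedron with \<open>P \<inter> \<int>\<^sup>2 = X\<close> and \<open>p\<close> an interior point of
  \<open>conv X\<close>. A point \<open>z\<close> of a hiding set lies outside \<open>P\<close>, so the segment from \<open>p\<close> to \<open>z\<close>
  leaves \<open>P\<close> through a facet whose open outer halfplane contains \<open>z\<close>. Two points beyond the
  same facet are joined by a segment inside that halfplane, which misses \<open>conv X\<close>; so distinct
  points of a hiding set leave through distinct facets.

  Call a direction \<open>u\<close> separating for a lattice point \<open>z \<notin> X\<close> if
  \<open>u \<bullet> z > max (u \<bullet> X)\<close>. Written as angles in \<open>(0, 2 pi)\<close>, the separating directions of \<open>z\<close>
  form an open interval unless the angle \<open>0\<close> already separates \<open>z\<close>. Lattice points in a bounded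
  region suffice: every lattice point \<open>z \<notin> X\<close> has one in \<open>conv (X \<union> {z})\<close>, found on the
  lattice line next to the edge of \<open>conv X\<close> facing \<open>z\<close>, and a direction separating that point
  also separates \<open>z\<close>. For these finitely many intervals the greedy algorithm yields a set \<open>T\<close>
  of angles meeting all of them together with \<open>|T|\<close> pairwise disjoint ones. The lattice points
  of the disjoint intervals form a hiding set, since a segment between two of them missing
  \<open>conv X\<close> is separated from \<open>X\<close> by a direction in both intervals. The supporting halfplanes
  in the directions \<open>T \<union> {0}\<close> cut out a polyhedron with lattice points \<open>X\<close> and at most
  \<open>|T| + 1\<close> facets.
\<close>

section \<open>Lattice points of the plane\<close>

lemma inner_vec2: "inner (x::real^2) y = x$1 * y$1 + x$2 * y$2"
  by (simp add: inner_vec_def sum_2)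

lemma lattice2_iff: "x \<in> lattice2 \<longleftrightarrow> x$1 \<in> \<int> \<and> x$2 \<in> \<int>"
  by (simp add: lattice2_def forall_2)

lemma lattice2_diff: "x \<in> lattice2 \<Longrightarrow> y \<in> lattice2 \<Longrightarrow> x - y \<in> lattice2"
  by (simp add: lattice2_iff)

lemma inner_lattice2_Ints: "x \<in> lattice2 \<Longrightarrow> y \<in> lattice2 \<Longrightarrow> inner x y \<in> \<int>"
  by (simp add: lattice2_iff inner_vec2)

lemma norm_ge_1_lattice2:
  assumes "c \<in> lattice2" "c \<noteq> 0"
  shows "1 \<le> norm c"
proof -
  have "c$1 \<noteq> 0 \<or> c$2 \<noteq> 0" using assms(2) by (simp add: vec_eq_iff forall_2)
  then have "1 \<le> \<bar>c$1\<bar> \<or> 1 \<le> \<bar>c$2\<bar>"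
    using assms(1) Ints_nonzero_abs_ge1 by (auto simp: lattice2_iff)
  then show ?thesis using component_le_norm_cart[of c 1] component_le_norm_cart[of c 2] by linarith
qed

lemma finite_lattice2_norm_le: "finite {w \<in> lattice2. norm w \<le> R}"
proof -
  define N where "N = \<lceil>R\<rceil>"
  have "{w \<in> lattice2. norm w \<le> R} \<subseteq> (\<lambda>(i, j). vector [of_int i, of_int j]) ` ({-N..N} \<times> {-N..N})"
  proof
    fix w :: "real^2" assume w: "w \<in> {w \<in> lattice2. norm w \<le> R}"
    obtain i j where ij: "w$1 = of_int i" "w$2 = of_int j"
      using w by (auto simp: lattice2_iff elim!: Ints_cases)
    have "\<bar>w$1\<bar> \<le> N" "\<bar>w$2\<bar> \<le> N"
      using w component_le_norm_cart[of w 1] component_le_norm_cart[of w 2] unfolding N_def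
      by (auto intro: order_trans[OF _ le_of_int_ceiling])
    then have "i \<in> {-N..N}" "j \<in> {-N..N}" using ij by (auto simp: abs_le_iff)
    moreover have "w = vector [of_int i, of_int j]" using ij by (simp add: vec_eq_iff forall_2)
    ultimately show "w \<in> (\<lambda>(i, j). vector [of_int i, of_int j]) ` ({-N..N} \<times> {-N..N})" by force
  qed
  then show ?thesis by (rule finite_subset) auto
qed

lemma parallel_if_orthogonal_to_same:
  fixes a a' v :: "real^2"
  assumes "inner a v = 0" "inner a' v = 0" "v \<noteq> 0" "a \<noteq> 0"
  obtains \<mu> where "a' = \<mu> *\<^sub>R a"
proof -
  have "(a$1 * a'$2 - a$2 * a'$1) * v$1 = 0" "(a$1 * a'$2 - a$2 * a'$1) * v$2 = 0"
    using assms(1,2) unfolding inner_vec2 by algebra+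
  moreover have "v$1 \<noteq> 0 \<or> v$2 \<noteq> 0" using assms(3) by (simp add: vec_eq_iff forall_2)
  ultimately have det: "a$1 * a'$2 = a$2 * a'$1" by auto
  have "a$1 \<noteq> 0 \<or> a$2 \<noteq> 0" using assms(4) by (simp add: vec_eq_iff forall_2)
  then show ?thesis
  proof
    assume "a$1 \<noteq> 0"
    then have "a' = (a'$1 / a$1) *\<^sub>R a" using det by (simp add: vec_eq_iff forall_2 field_simps)
    then show ?thesis by (rule that)
  next
    assume "a$2 \<noteq> 0"
    then have "a' = (a'$2 / a$2) *\<^sub>R a" using det by (simp add: vec_eq_iff forall_2 field_simps)
    then show ?thesis by (rule that)
  qed
qed

section \<open>Directions and separating angles\<close>

definition dir :: "real \<Rightarrow> real^2" where
  "dir t = vector [cos t, sin t]"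

lemma inner_dir: "inner (dir t) v = cos t * v$1 + sin t * v$2"
  by (simp add: dir_def inner_vec2)

lemma norm_dir [simp]: "norm (dir t) = 1"
  by (simp add: norm_eq_sqrt_inner inner_vec2 dir_def)

lemma dir_add_pi: "dir (t + pi) = - dir t"
  by (simp add: dir_def vec_eq_iff forall_2)

lemma dir_add_2pi: "dir (t + 2 * pi) = dir t"
  by (simp add: dir_def vec_eq_iff forall_2)

lemma sin_diff_mult_inner_dir:
  "sin (b - a) * inner (dir t) v = sin (b - t) * inner (dir a) v + sin (t - a) * inner (dir b) v"
  by (simp add: inner_dir sin_diff algebra_simps)

lemma eq_scaleR_dir:
  fixes a :: "real^2"
  assumes "a \<noteq> 0"
  obtains t where "0 \<le> t" "t < 2 * pi" "a = norm a *\<^sub>R dir t"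
proof -
  have n: "norm a \<noteq> 0" using assms by simp
  have eq: "(norm a)\<^sup>2 = (a$1)\<^sup>2 + (a$2)\<^sup>2"
    unfolding power2_norm_eq_inner inner_vec2 by (simp add: power2_eq_square)
  have "(a$1 / norm a)\<^sup>2 + (a$2 / norm a)\<^sup>2 = ((a$1)\<^sup>2 + (a$2)\<^sup>2) / (norm a)\<^sup>2"
    by (simp add: power_divide add_divide_distrib)
  also have "\<dots> = 1" using n by (simp add: eq[symmetric])
  finally obtain t where t: "0 \<le> t" "t < 2 * pi" "a$1 / norm a = cos t" "a$2 / norm a = sin t"
    by (rule sincos_total_2pi)
  show ?thesis
    by (rule that[OF t(1,2)]) (simp add: dir_def vec_eq_iff forall_2 n flip: t(3,4))
qed

definition dir_separates :: "(real^2) set \<Rightarrow> real^2 \<Rightarrow> real \<Rightarrow> bool" where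
  "dir_separates X z t \<longleftrightarrow> (\<forall>x\<in>X. inner (dir t) x < inner (dir t) z)"

definition separating_angles :: "(real^2) set \<Rightarrow> real^2 \<Rightarrow> real set" where
  "separating_angles X z = {t. 0 < t \<and> t < 2 * pi \<and> dir_separates X z t}"

lemma dir_separates_between:
  assumes "a < t" "t < b" "b - a < pi" "dir_separates X z a" "dir_separates X z b"
  shows "dir_separates X z t"
  unfolding dir_separates_def
proof
  fix x assume "x \<in> X"
  then have "0 < inner (dir a) (z - x)" "0 < inner (dir b) (z - x)"
    using assms(4,5) by (auto simp: dir_separates_def inner_diff_right)
  moreover have "0 < sin (b - a)" "0 < sin (b - t)" "0 < sin (t - a)"
    using assms(1-3) by (simp_all add: sin_gt_zero)
  ultimately have "0 < sin (b - t) * inner (dir a) (z - x) + sin (t - a) * inner (dir b) (z - x)"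
    by (intro add_pos_pos mult_pos_pos)
  then have "0 < sin (b - a) * inner (dir t) (z - x)"
    by (simp only: sin_diff_mult_inner_dir[of b a t])
  with \<open>0 < sin (b - a)\<close> have "0 < inner (dir t) (z - x)"
    by (simp add: zero_less_mult_iff)
  then show "inner (dir t) x < inner (dir t) z" by (simp add: inner_diff_right)
qed

lemma is_interval_separating_angles:
  assumes "X \<noteq> {}" "\<not> dir_separates X z 0"
  shows "is_interval (separating_angles X z)"
  unfolding is_interval_1
proof (intro ballI allI impI)
  fix a b t assume a: "a \<in> separating_angles X z" and b: "b \<in> separating_angles X z"
    and t: "a \<le> t \<and> t \<le> b"
  have a': "0 < a" "dir_separates X z a" and b': "b < 2 * pi" "dir_separates X z b"
    using a b by (auto simp: separating_angles_def)
  show "t \<in> separating_angles X z"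
  proof (cases "t = a \<or> t = b")
    case False
    then have "a < t" "t < b" using t by auto
    consider "b - a < pi" | "b = a + pi" | "pi < b - a" by linarith
    then show ?thesis
    proof cases
      case 1
      then show ?thesis
        using a' b' \<open>a < t\<close> \<open>t < b\<close> dir_separates_between[of a t b X z]
        by (simp add: separating_angles_def)
    next
      case 2
      then have "dir b = - dir a" by (simp add: dir_add_pi)
      moreover obtain x where "x \<in> X" using assms(1) by blast
      ultimately have "inner (dir a) x < inner (dir a) z" "inner (dir a) z < inner (dir a) x"
        using a'(2) b'(2) by (auto simp: dir_separates_def)
      then show ?thesis by simp
    next
      case 3
      \<comment> \<open>the arc from \<open>b\<close> to \<open>a + 2 pi\<close> is shorter than \<open>pi\<close> and contains \<open>2 pi\<close>\<close>
      have "dir_separates X z (a + 2 * pi)" using a'(2) by (simp add: dir_separates_def dir_add_2pi)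
      then have "dir_separates X z (2 * pi)"
        using dir_separates_between[of b "2 * pi" "a + 2 * pi"] 3 a'(1) b' by simp
      moreover have "dir (2 * pi) = dir 0" using dir_add_2pi[of 0] by simp
      ultimately show ?thesis using assms(2) by (simp add: dir_separates_def)
    qed
  qed (use a b in auto)
qed

lemma open_separating_angles:
  assumes "finite X"
  shows "open (separating_angles X z)"
proof -
  have "separating_angles X z = {0<..<2 * pi} \<inter> (\<Inter>x\<in>X. {t. cos t * x$1 + sin t * x$2 < cos t * z$1 + sin t * z$2})"
    by (auto simp: separating_angles_def dir_separates_def inner_dir)
  moreover have "open {t. cos t * x$1 + sin t * x$2 < cos t * z$1 + sin t * z$2}" for x :: "real^2"
    by (intro open_Collect_less continuous_intros)
  ultimately show ?thesis
    using assms by (simp add: open_Int open_INT)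
qed

lemma bounded_separating_angles: "bounded (separating_angles X z)"
  by (rule bounded_subset[of "{0..2 * pi}"]) (auto simp: separating_angles_def)

lemma exists_dir_separating:
  fixes S T :: "(real^2) set"
  assumes "convex S" "closed S" "S \<noteq> {}" "convex T" "compact T" "T \<noteq> {}" "S \<inter> T = {}"
  obtains t where "0 \<le> t" "t < 2 * pi" "\<And>x y. x \<in> S \<Longrightarrow> y \<in> T \<Longrightarrow> inner (dir t) x < inner (dir t) y"
proof -
  obtain a b where ab: "\<forall>x\<in>S. inner a x < b" "\<forall>y\<in>T. b < inner a y"
    using separating_hyperplane_closed_compact[OF assms(1,2,4-7)] by blast
  have "a \<noteq> 0" using ab assms(3,6) by fastforce
  then obtain t where t: "0 \<le> t" "t < 2 * pi" "a = norm a *\<^sub>R dir t" by (rule eq_scaleR_dir)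
  show ?thesis
  proof (rule that[OF t(1,2)])
    fix x y assume "x \<in> S" "y \<in> T"
    then have "norm a * inner (dir t) x < norm a * inner (dir t) y"
      using ab t(3) by (metis inner_scaleR_left less_trans)
    then show "inner (dir t) x < inner (dir t) y" by (simp add: mult_less_cancel_left)
  qed
qed

lemma separating_angles_nonempty:
  assumes "finite X" "z \<notin> convex hull X" "\<not> dir_separates X z 0"
  shows "separating_angles X z \<noteq> {}"
proof -
  have "X \<noteq> {}" using assms(3) by (auto simp: dir_separates_def)
  moreover have "closed (convex hull X)"
    using assms(1) by (simp add: finite_imp_compact_convex_hull compact_imp_closed)
  moreover have "convex hull X \<inter> {z} = {}" using assms(2) by blast
  ultimately obtain t where t: "0 \<le> t" "t < 2 * pi"
    and sep: "\<And>x y. x \<in> convex hull X \<Longrightarrow> y \<in> {z} \<Longrightarrow> inner (dir t) x < inner (dir t) y"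
    using exists_dir_separating[of "convex hull X" "{z}"] by auto
  then have "dir_separates X z t" by (simp add: dir_separates_def hull_inc)
  with assms(3) t(1,2) have "t \<in> separating_angles X z" by (cases "t = 0") (auto simp: separating_angles_def)
  then show ?thesis by blast
qed

lemma separating_angles_open_interval:
  assumes "finite X" "z \<notin> convex hull X" "\<not> dir_separates X z 0"
  shows "open (separating_angles X z) \<and> is_interval (separating_angles X z)
    \<and> bounded (separating_angles X z) \<and> separating_angles X z \<noteq> {}"
proof -
  have "X \<noteq> {}" using assms(3) by (auto simp: dir_separates_def)
  then show ?thesis
    using open_separating_angles[OF assms(1)] is_interval_separating_angles[OF _ assms(3)]
      bounded_separating_angles separating_angles_nonempty[OF assms] by blast
qed

lemma dir_separates_if_dominated:
  assumes "finite X" "w \<in> convex hull (insert z X)" "dir_separates X w t"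
  shows "dir_separates X z t"
proof (cases "X = {}")
  case False
  define m where "m = Max ((\<lambda>x. inner (dir t) x) ` X)"
  have "m \<in> (\<lambda>x. inner (dir t) x) ` X" unfolding m_def using assms(1) False by simp
  then obtain x0 where "x0 \<in> X" "m = inner (dir t) x0" by auto
  have "m < inner (dir t) z"
  proof (rule ccontr)
    assume "\<not> m < inner (dir t) z"
    then have "insert z X \<subseteq> {x. inner (dir t) x \<le> m}" using assms(1) by (auto simp: m_def)
    then have "convex hull (insert z X) \<subseteq> {x. inner (dir t) x \<le> m}"
      by (simp add: hull_minimal convex_halfspace_le)
    then show False using assms(2,3) \<open>x0 \<in> X\<close> \<open>m = inner (dir t) x0\<close> by (force simp: dir_separates_def)
  qed
  show ?thesis
    unfolding dir_separates_def
  proof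
    fix x assume "x \<in> X"
    then have "inner (dir t) x \<le> m" unfolding m_def using assms(1) by simp
    then show "inner (dir t) x < inner (dir t) z" using \<open>m < inner (dir t) z\<close> by linarith
  qed
qed (simp add: dir_separates_def)

section \<open>Piercing open intervals\<close>

lemma Inf_less_Sup_open:
  fixes S :: "real set"
  assumes "open S" "bounded S" "x \<in> S"
  shows "Inf S < x" "x < Sup S"
proof -
  obtain e where e: "e > 0" "ball x e \<subseteq> S" using assms open_contains_ball by blast
  then have "x - e/2 \<in> S" "x + e/2 \<in> S" by (auto simp: dist_real_def subset_iff)
  moreover have "bdd_below S" "bdd_above S"
    using assms(2) bounded_imp_bdd_below bounded_imp_bdd_above by auto
  ultimately have "Inf S \<le> x - e/2" "x + e/2 \<le> Sup S" using cInf_lower cSup_upper by blast+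
  then show "Inf S < x" "x < Sup S" using e by linarith+
qed

lemma mem_is_interval_Inf_Sup:
  fixes S :: "real set"
  assumes "is_interval S" "bounded S" "S \<noteq> {}" "Inf S < p" "p < Sup S"
  shows "p \<in> S"
proof -
  have "bdd_below S" "bdd_above S"
    using assms(2) bounded_imp_bdd_below bounded_imp_bdd_above by auto
  then obtain x y where "x \<in> S" "x < p" "y \<in> S" "p < y"
    using assms(3-5) cInf_less_iff less_cSup_iff by metis
  then show ?thesis using assms(1) unfolding is_interval_1 by (meson less_imp_le)
qed

lemma open_intervals_greedy_step:
  fixes I :: "'a \<Rightarrow> real set"
  assumes "finite W" "W \<noteq> {}"
    and intv: "\<And>w. w \<in> W \<Longrightarrow> open (I w) \<and> is_interval (I w) \<and> bounded (I w) \<and> I w \<noteq> {}"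
  obtains w0 M p where "w0 \<in> M" "M \<subseteq> W" "\<And>w. w \<in> M \<Longrightarrow> p \<in> I w"
    "\<And>w. w \<in> W - M \<Longrightarrow> disjnt (I w0) (I w)"
proof -
  obtain w0 where w0: "w0 \<in> W" "\<And>w. w \<in> W \<Longrightarrow> Sup (I w0) \<le> Sup (I w)"
    using arg_min_if_finite[OF assms(1,2), of "\<lambda>w. Sup (I w)"] by (metis not_le)
  define r where "r = Sup (I w0)"
  define M where "M = {w \<in> W. Inf (I w) < r}"
  have "finite M" using assms(1) by (simp add: M_def)
  have "w0 \<in> M"
  proof -
    obtain x where "x \<in> I w0" using intv[OF w0(1)] by blast
    then have "Inf (I w0) < r"
      using intv[OF w0(1)] Inf_less_Sup_open[of "I w0" x] unfolding r_def by linarith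
    then show ?thesis using w0(1) by (simp add: M_def)
  qed
  define m where "m = Max ((\<lambda>w. Inf (I w)) ` M)"
  have "m < r" unfolding m_def using \<open>finite M\<close> \<open>w0 \<in> M\<close> by (subst Max_less_iff) (auto simp: M_def)
  have common: "(m + r) / 2 \<in> I w" if "w \<in> M" for w
  proof -
    have "Inf (I w) \<le> m" unfolding m_def using that \<open>finite M\<close> by simp
    moreover have "r \<le> Sup (I w)" using that w0(2) by (simp add: M_def r_def)
    ultimately show ?thesis
      using intv that \<open>m < r\<close> by (intro mem_is_interval_Inf_Sup) (auto simp: M_def)
  qed
  have disj: "disjnt (I w0) (I w)" if "w \<in> W - M" for w
  proof -
    have "r \<le> Inf (I w)" "w \<in> W" using that by (auto simp: M_def)
    have False if "x \<in> I w0" "x \<in> I w" for x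
      using Inf_less_Sup_open(1)[of "I w" x] Inf_less_Sup_open(2)[of "I w0" x]
        intv[OF \<open>w \<in> W\<close>] intv[OF w0(1)] that \<open>r \<le> Inf (I w)\<close> unfolding r_def by linarith
    then show ?thesis by (auto simp: disjnt_def)
  qed
  have "M \<subseteq> W" by (simp add: M_def)
  show ?thesis by (rule that[OF \<open>w0 \<in> M\<close> \<open>M \<subseteq> W\<close> common disj])
qed

lemma interval_piercing_le_packing:
  fixes I :: "'a \<Rightarrow> real set"
  assumes "finite W"
    and "\<And>w. w \<in> W \<Longrightarrow> open (I w) \<and> is_interval (I w) \<and> bounded (I w) \<and> I w \<noteq> {}"
  shows "\<exists>T D. finite T \<and> D \<subseteq> W \<and> pairwise (\<lambda>v w. disjnt (I v) (I w)) D \<and> card T \<le> card D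
    \<and> (\<forall>w\<in>W. I w \<inter> T \<noteq> {})"
  using assms
proof (induction "card W" arbitrary: W rule: less_induct)
  case less
  show ?case
  proof (cases "W = {}")
    case True
    then show ?thesis by (intro exI[of _ "{}"]) auto
  next
    case False
    obtain w0 M p where step: "w0 \<in> M" "M \<subseteq> W" "\<And>w. w \<in> M \<Longrightarrow> p \<in> I w"
      "\<And>w. w \<in> W - M \<Longrightarrow> disjnt (I w0) (I w)"
      using open_intervals_greedy_step[of W I, OF less.prems(1) False less.prems(2)] by blast
    have "card (W - M) < card W"
      using less.prems(1) step(1,2) by (intro psubset_card_mono) auto
    then obtain T D where IH: "finite T" "D \<subseteq> W - M" "pairwise (\<lambda>v w. disjnt (I v) (I w)) D"
      "card T \<le> card D" "\<forall>w\<in>W - M. I w \<inter> T \<noteq> {}"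
      using less.hyps[of "W - M"] less.prems by auto
    have "finite D" using IH(2) less.prems(1) finite_subset by blast
    moreover have "w0 \<notin> D" using IH(2) step(1) by blast
    ultimately have "card (insert p T) \<le> card (insert w0 D)"
      using IH(1,4) by (simp add: card_insert_if)
    moreover have "pairwise (\<lambda>v w. disjnt (I v) (I w)) (insert w0 D)"
      using IH(2,3) step(4) by (auto simp: pairwise_insert disjnt_sym)
    moreover have "\<forall>w\<in>W. I w \<inter> insert p T \<noteq> {}"
      using IH(5) step(3) by blast
    ultimately show ?thesis
      using IH(1,2) step(1,2) by (intro exI[of _ "insert p T"] exI[of _ "insert w0 D"]) auto
  qed
qed

section \<open>Facets of polyhedra\<close>

lemma interior_convex_hull_nonempty:
  fixes X :: "(real^2) set"
  assumes "aff_dim X = 2"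
  shows "interior (convex hull X) \<noteq> {}"
proof -
  have "aff_dim (convex hull X) = int DIM(real^2)" using assms by (simp add: aff_dim_convex_hull)
  then have "interior (convex hull X) = rel_interior (convex hull X)"
    by (simp add: interior_rel_interior_gen)
  moreover have "convex hull X \<noteq> {}" using assms by auto
  ultimately show ?thesis by (simp add: rel_interior_eq_empty)
qed

lemma polyhedron_exit_facet:
  fixes S :: "'a::euclidean_space set"
  assumes "polyhedron S" "p \<in> interior S" "z \<notin> S"
  obtains C a b t where "C facet_of S" "a \<noteq> 0" "S \<subseteq> {x. inner a x \<le> b}" "C = S \<inter> {x. inner a x = b}"
    "0 < t" "p + t *\<^sub>R (z - p) \<in> C" "b < inner a z"
proof -
  have "p \<in> S" using assms(2) interior_subset by blast
  then have "closed_segment p z \<inter> frontier S \<noteq> {}"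
    using assms(3) by (intro connected_Int_frontier) auto
  then obtain y where y: "y \<in> closed_segment p z" "y \<in> frontier S" by auto
  have "interior S = rel_interior S" using assms(2) rel_interior_nonempty_interior by blast
  then have "y \<in> S - rel_interior S"
    using y(2) polyhedron_imp_closed[OF assms(1)] by (simp add: frontier_def)
  then obtain C where C: "C facet_of S" "y \<in> C" using rel_boundary_of_polyhedron[OF assms(1)] by blast
  obtain a b where ab: "a \<noteq> 0" "S \<subseteq> {x. inner a x \<le> b}" "C = S \<inter> {x. inner a x = b}"
    using facet_of_polyhedron[OF assms(1) C(1)] by blast
  have "p \<in> interior {x. inner a x \<le> b}" using assms(2) interior_mono[OF ab(2)] by blast
  then have ap: "inner a p < b" using ab(1) by simp
  obtain u where u: "0 \<le> u" "u \<le> 1" "y = (1 - u) *\<^sub>R p + u *\<^sub>R z"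
    using y(1) unfolding closed_segment_def by blast
  have ay: "inner a y = (1 - u) * inner a p + u * inner a z" using u(3) by (simp add: inner_add_right)
  moreover have "inner a y = b" using C(2) ab(3) by auto
  ultimately have "u \<noteq> 0" using ap by auto
  have "u \<noteq> 1" using u(3) C(2) ab(3) assms(3) by auto
  have "(1 - u) * inner a p < (1 - u) * b" using ap u(2) \<open>u \<noteq> 1\<close> by simp
  then have "u * b < u * inner a z"
    using ay \<open>inner a y = b\<close> by (simp add: algebra_simps)
  then have "b < inner a z" using u(1) \<open>u \<noteq> 0\<close> by (simp add: mult_less_cancel_left)
  moreover have "p + u *\<^sub>R (z - p) = y" using u(3) by (simp add: algebra_simps)
  ultimately show ?thesis
    using that[OF C(1) ab, of u] C(2) u(1) \<open>u \<noteq> 0\<close> by simp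
qed

lemma card_facets_le_card_halfspaces:
  fixes P :: "'a::euclidean_space set"
  assumes "finite G" "\<forall>h\<in>G. \<exists>a b. a \<noteq> 0 \<and> h = {x. inner a x \<le> b}" "P = affine hull P \<inter> \<Inter>G"
  shows "card {F. F facet_of P} \<le> card G"
  using assms
proof (induction "card G" arbitrary: G rule: less_induct)
  case less
  show ?case
  proof (cases "\<exists>G'. G' \<subset> G \<and> \<not> P \<subset> affine hull P \<inter> \<Inter>G'")
    case True
    then obtain G' where G': "G' \<subset> G" "\<not> P \<subset> affine hull P \<inter> \<Inter>G'" by blast
    have "P \<subseteq> affine hull P \<inter> \<Inter>G'" using less.prems(3) G'(1) by blast
    then have "P = affine hull P \<inter> \<Inter>G'" using G'(2) by (simp add: psubset_eq)
    moreover have "card G' < card G" using G'(1) less.prems(1) by (rule psubset_card_mono[rotated])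
    moreover have "finite G'" using G'(1) less.prems(1) finite_subset by blast
    moreover have "\<forall>h\<in>G'. \<exists>a b. a \<noteq> 0 \<and> h = {x. inner a x \<le> b}"
      using G'(1) less.prems(2) by blast
    ultimately have "card {F. F facet_of P} \<le> card G'"
      using less.hyps by blast
    then show ?thesis using \<open>card G' < card G\<close> by simp
  next
    case False
    then have min: "\<And>G'. G' \<subset> G \<Longrightarrow> P \<subset> affine hull P \<inter> \<Inter>G'" by auto
    have "\<forall>h\<in>G. \<exists>ab. fst ab \<noteq> 0 \<and> h = {x. inner (fst ab) x \<le> snd ab}"
      using less.prems(2) by force
    then obtain ab where ab: "\<forall>h\<in>G. fst (ab h) \<noteq> 0 \<and> h = {x. inner (fst (ab h)) x \<le> snd (ab h)}"
      by (rule exE[OF bchoice])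
    have "{F. F facet_of P} = (\<lambda>h. P \<inter> {x. inner (fst (ab h)) x = snd (ab h)}) ` G"
      using facet_of_polyhedron_explicit[OF less.prems(1) less.prems(3) bspec[OF ab] min]
      by (auto simp: image_iff)
    then show ?thesis using card_image_le[OF less.prems(1)] by simp
  qed
qed

lemma facet_outer_halfspace_unique:
  fixes P :: "(real^2) set"
  assumes "C facet_of P" "interior P \<noteq> {}"
    and "a \<noteq> 0" "P \<subseteq> {x. inner a x \<le> b}" "C = P \<inter> {x. inner a x = b}"
    and "a' \<noteq> 0" "P \<subseteq> {x. inner a' x \<le> b'}" "C = P \<inter> {x. inner a' x = b'}"
  shows "{x. b < inner a x} = {x. b' < inner a' x}"
proof -
  obtain p where p: "p \<in> interior P" using assms(2) by blast
  have ap: "inner a p < b" "inner a' p < b'"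
    using interior_mono[OF assms(4)] interior_mono[OF assms(7)] p assms(3,6) by auto
  have "aff_dim P = 2" using aff_dim_nonempty_interior[OF assms(2)] by simp
  then have "aff_dim C = 1" using assms(1) by (simp add: facet_of_def)
  moreover obtain y1 where "y1 \<in> C" using assms(1) by (auto simp: facet_of_def)
  moreover have "C \<noteq> {y1}" using \<open>aff_dim C = 1\<close> by auto
  ultimately obtain y2 where y: "y1 \<in> C" "y2 \<in> C" "y1 \<noteq> y2" by blast
  have "inner a y1 = b" "inner a y2 = b" "inner a' y1 = b'" "inner a' y2 = b'"
    using y assms(5,8) by auto
  then have "inner a (y2 - y1) = 0" "inner a' (y2 - y1) = 0" by (simp_all add: inner_diff_right)
  moreover have "y2 - y1 \<noteq> 0" using y(3) by simp
  ultimately obtain \<mu> where \<mu>: "a' = \<mu> *\<^sub>R a"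
    using assms(3) by (rule parallel_if_orthogonal_to_same)
  have b': "b' = \<mu> * b" using y(1) assms(5,8) \<mu> by auto
  have "0 < \<mu>"
  proof (rule ccontr)
    assume "\<not> 0 < \<mu>"
    then have "\<mu> * b \<le> \<mu> * inner a p" using ap(1) by (simp add: mult_left_mono_neg)
    then show False using ap(2) \<mu> b' by simp
  qed
  then show ?thesis using \<mu> b' by (simp add: mult_less_cancel_left)
qed

definition beyond_facet :: "'a::real_inner set \<Rightarrow> 'a set \<Rightarrow> 'a \<Rightarrow> bool" where
  "beyond_facet P C z \<longleftrightarrow>
    (\<exists>a b. a \<noteq> 0 \<and> P \<subseteq> {x. inner a x \<le> b} \<and> C = P \<inter> {x. inner a x = b} \<and> b < inner a z)"

lemma closed_segment_beyond_same_facet: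
  fixes P :: "(real^2) set"
  assumes "C facet_of P" "interior P \<noteq> {}" "beyond_facet P C z" "beyond_facet P C w"
  shows "closed_segment z w \<inter> P = {}"
proof -
  obtain a b where ab: "a \<noteq> 0" "P \<subseteq> {x. inner a x \<le> b}" "C = P \<inter> {x. inner a x = b}" "b < inner a z"
    using assms(3) unfolding beyond_facet_def by blast
  obtain a' b' where ab': "a' \<noteq> 0" "P \<subseteq> {x. inner a' x \<le> b'}" "C = P \<inter> {x. inner a' x = b'}"
      "b' < inner a' w"
    using assms(4) unfolding beyond_facet_def by blast
  have "b < inner a w"
    using facet_outer_halfspace_unique[OF assms(1,2) ab(1-3) ab'(1-3)] ab'(4) by blast
  then have "closed_segment z w \<subseteq> {x. b < inner a x}"
    using ab(4) by (intro closed_segment_subset) (auto intro: convex_halfspace_gt)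
  then show ?thesis using ab(2) by fastforce
qed

lemma card_hiding_set_le_facets:
  assumes P: "polyhedron P" "P \<inter> lattice2 = X" and H: "hiding_set X H"
    and int: "interior (convex hull X) \<noteq> {}"
  shows "finite H \<and> card H \<le> card {F. F facet_of P}"
proof -
  have "X \<subseteq> P" using P(2) by blast
  then have KP: "convex hull X \<subseteq> P" using polyhedron_imp_convex[OF P(1)] by (rule hull_minimal)
  then obtain p where p: "p \<in> interior P" using int interior_mono by blast
  have "\<exists>C. C facet_of P \<and> beyond_facet P C z" if z: "z \<in> H" for z
  proof -
    have "z \<notin> P" using H P(2) z by (auto simp: hiding_set_def)
    then obtain C a b t where "C facet_of P" "a \<noteq> 0" "P \<subseteq> {x. inner a x \<le> b}"
      "C = P \<inter> {x. inner a x = b}" "0 < t" "p + t *\<^sub>R (z - p) \<in> C" "b < inner a z"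
      by (rule polyhedron_exit_facet[OF P(1) p])
    then show ?thesis unfolding beyond_facet_def by blast
  qed
  then obtain \<phi> where \<phi>: "\<And>z. z \<in> H \<Longrightarrow> \<phi> z facet_of P \<and> beyond_facet P (\<phi> z) z" by metis
  have "inj_on \<phi> H"
  proof (rule inj_onI, rule ccontr)
    fix z w assume z: "z \<in> H" and w: "w \<in> H" and eq: "\<phi> z = \<phi> w" and "z \<noteq> w"
    then have "closed_segment z w \<inter> P = {}"
      using closed_segment_beyond_same_facet \<phi> p by (metis empty_iff)
    moreover have "closed_segment z w \<inter> convex hull X \<noteq> {}"
      using H z w \<open>z \<noteq> w\<close> unfolding hiding_set_def by blast
    ultimately show False using KP by blast
  qed
  moreover have "\<phi> ` H \<subseteq> {F. F facet_of P}" using \<phi> by blast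
  moreover have "finite {F. F facet_of P}" using finite_polyhedron_facets[OF P(1)] .
  ultimately have "finite (\<phi> ` H)" and card: "card (\<phi> ` H) \<le> card {F. F facet_of P}"
    by (auto intro: finite_subset card_mono)
  then have "finite H" using finite_imageD[OF _ \<open>inj_on \<phi> H\<close>] by blast
  with card show ?thesis using card_image[OF \<open>inj_on \<phi> H\<close>] by simp
qed

section \<open>The lattice line next to an edge\<close>

definition perp :: "real^2 \<Rightarrow> real^2" where
  "perp c = vector [c$2, - c$1]"

lemma inner_perp_self [simp]: "inner c (perp c) = 0"
  by (simp add: perp_def inner_vec2)

lemma perp_minus: "perp (- c) = - perp c"
  by (simp add: perp_def vec_eq_iff forall_2)

lemma lattice2_primitive_multiple:
  assumes "v \<in> lattice2" "v \<noteq> 0"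
  obtains c e g where "c \<in> lattice2" "e \<in> lattice2" "inner c e = 1" "1 \<le> g" "v = g *\<^sub>R perp c"
proof -
  obtain n1 n2 where n: "v$1 = of_int n1" "v$2 = of_int n2"
    using assms(1) by (auto simp: lattice2_iff elim!: Ints_cases)
  have "n1 \<noteq> 0 \<or> n2 \<noteq> 0" using assms(2) n by (auto simp: vec_eq_iff forall_2)
  define g where "g = gcd n1 n2"
  have "1 \<le> g" using \<open>n1 \<noteq> 0 \<or> n2 \<noteq> 0\<close> unfolding g_def
    by (metis gcd_eq_0_iff gcd_ge_0_int int_one_le_iff_zero_less order_le_less)
  have "coprime (n1 div g) (n2 div g)" unfolding g_def using div_gcd_coprime \<open>n1 \<noteq> 0 \<or> n2 \<noteq> 0\<close> by blast
  then obtain s t where st: "s * (- (n2 div g)) + t * (n1 div g) = 1"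
    by (metis bezout_int coprime_commute coprime_minus_left_iff coprime_imp_gcd_eq_1)
  define c :: "real^2" where "c = vector [of_int (- (n2 div g)), of_int (n1 div g)]"
  define e :: "real^2" where "e = vector [of_int s, of_int t]"
  have "inner c e = of_int (s * (- (n2 div g)) + t * (n1 div g))"
    by (simp add: c_def e_def inner_vec2 algebra_simps)
  then have "inner c e = 1" unfolding st by simp
  moreover have "v = of_int g *\<^sub>R perp c"
    using n by (simp add: c_def perp_def vec_eq_iff forall_2 g_def flip: of_int_mult)
  ultimately show ?thesis
    using \<open>1 \<le> g\<close> by (intro that[of c e "of_int g"]) (auto simp: c_def e_def lattice2_iff)
qed

lemma lattice2_edge_primitive_normal:
  assumes "L0 \<in> lattice2" "M0 \<in> lattice2" "L0 \<noteq> M0" "a \<noteq> 0" "inner a L0 = inner a M0"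
  obtains c e L M g l where "{L, M} = {L0, M0}" "c \<in> lattice2" "e \<in> lattice2" "inner c e = 1"
    "1 \<le> g" "M = L + g *\<^sub>R perp c" "0 < l" "a = l *\<^sub>R c"
proof -
  have "M0 - L0 \<in> lattice2" "M0 - L0 \<noteq> 0" using assms(1-3) by (auto simp: lattice2_diff)
  then obtain c e g where ce: "c \<in> lattice2" "e \<in> lattice2" "inner c e = 1" "1 \<le> g"
    and v: "M0 - L0 = g *\<^sub>R perp c"
    by (rule lattice2_primitive_multiple)
  have "inner c (M0 - L0) = 0" by (simp add: v)
  moreover have "inner a (M0 - L0) = 0" using assms(5) by (simp add: inner_diff_right)
  moreover have "c \<noteq> 0" using ce(3) by auto
  ultimately obtain \<mu> where \<mu>: "a = \<mu> *\<^sub>R c"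
    using \<open>M0 - L0 \<noteq> 0\<close> parallel_if_orthogonal_to_same by metis
  have "\<mu> \<noteq> 0" using \<mu> assms(4) by auto
  show ?thesis
  proof (cases "0 < \<mu>")
    case True
    then show ?thesis
      using that[of L0 M0 c e g \<mu>] ce v \<mu> by (simp add: algebra_simps)
  next
    case False
    have "L0 = M0 + g *\<^sub>R perp (- c)" using v by (simp add: perp_minus algebra_simps)
    moreover have "a = (- \<mu>) *\<^sub>R (- c)" using \<mu> by simp
    ultimately show ?thesis
      using that[of M0 L0 "- c" "- e" g "- \<mu>"] ce False \<open>\<mu> \<noteq> 0\<close>
      by (auto simp: lattice2_iff insert_commute)
  qed
qed

lemma decompose_along_perp:
  assumes "inner c e = 1"
  shows "v = inner c v *\<^sub>R e + (e$2 * v$1 - e$1 * v$2) *\<^sub>R perp c"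
proof -
  have ce: "c$1 * e$1 + c$2 * e$2 = 1" using assms by (simp add: inner_vec2)
  have "inner c v * e$1 + (e$2 * v$1 - e$1 * v$2) * perp c $ 1 = v$1 * (c$1 * e$1 + c$2 * e$2)"
    "inner c v * e$2 + (e$2 * v$1 - e$1 * v$2) * perp c $ 2 = v$2 * (c$1 * e$1 + c$2 * e$2)"
    unfolding perp_def inner_vec2 vector_2 by algebra+
  then show ?thesis unfolding ce by (simp add: vec_eq_iff forall_2)
qed

lemma mem_convex_hull_triangle_scaled:
  fixes z L d :: "'a::real_vector"
  assumes "0 < H" "0 \<le> k" "k + 1 \<le> H"
  shows "L + (1 / H) *\<^sub>R (z - L) + (k / H) *\<^sub>R d \<in> convex hull {z, L, L + d}"
proof -
  have "L + (1 / H) *\<^sub>R (z - L) + (k / H) *\<^sub>R d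
      = (1 / H) *\<^sub>R z + (1 - 1 / H - k / H) *\<^sub>R L + (k / H) *\<^sub>R (L + d)"
    by (simp add: algebra_simps)
  moreover have "(1 + k) / H \<le> 1" using assms by simp
  then have "0 \<le> 1 - 1 / H - k / H" by (simp add: add_divide_distrib)
  ultimately show ?thesis
    unfolding convex_hull_3 using assms
    by (intro CollectI exI[of _ "1 / H"] exI[of _ "1 - 1 / H - k / H"] exI[of _ "k / H"]) auto
qed

lemma lattice2_point_next_layer:
  assumes "c \<in> lattice2" "e \<in> lattice2" "inner c e = 1" "L \<in> lattice2" "z \<in> lattice2"
    and "inner c L < inner c z"
  obtains w where "w \<in> lattice2" "inner c w = inner c L + 1" "w \<in> convex hull {z, L, L + perp c}"
proof -
  define H where "H = inner c (z - L)"
  define \<alpha> where "\<alpha> = e$2 * (z - L)$1 - e$1 * (z - L)$2"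
  obtain Hi where Hi: "H = of_int Hi"
    using inner_lattice2_Ints[OF assms(1) lattice2_diff[OF assms(5,4)]] unfolding H_def
    by (auto elim: Ints_cases)
  have "\<alpha> \<in> \<int>" using assms(2,4,5) by (simp add: \<alpha>_def lattice2_iff)
  then obtain ai where ai: "\<alpha> = of_int ai" by (auto elim: Ints_cases)
  have "0 < Hi" using assms(6) Hi by (simp add: H_def inner_diff_right)
  have dec: "z - L = H *\<^sub>R e + \<alpha> *\<^sub>R perp c"
    unfolding H_def \<alpha>_def by (rule decompose_along_perp[OF assms(3)])
  \<comment> \<open>the lattice points of the next layer are \<open>L + e + q perp c\<close>; pick \<open>q\<close> with \<open>q H - \<alpha>\<close> in \<open>[0, H)\<close>\<close>
  define k where "k = (- ai) mod Hi"
  define q where "q = (ai + k) div Hi"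
  have k: "0 \<le> k" "k \<le> Hi - 1" using \<open>0 < Hi\<close> by (auto simp: k_def)
  have "(ai + k) mod Hi = 0" by (simp add: k_def mod_add_right_eq)
  then have "ai + k = q * Hi" unfolding q_def by (metis div_mult_mod_eq add_0_right)
  then have q: "of_int q = (\<alpha> + of_int k) / H"
    using \<open>0 < Hi\<close> Hi ai by (simp add: field_simps flip: of_int_add of_int_mult)
  define w where "w = L + e + of_int q *\<^sub>R perp c"
  have "w \<in> lattice2"
    using assms(1,2,4) by (simp add: w_def perp_def lattice2_iff)
  moreover have "inner c w = inner c L + 1"
    using assms(3) by (simp add: w_def inner_add_right)
  moreover have "w \<in> convex hull {z, L, L + perp c}"
  proof -
    have "w = L + (1 / H) *\<^sub>R (z - L) + (k / H) *\<^sub>R perp c"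
      using \<open>0 < Hi\<close> Hi by (simp add: w_def dec q scaleR_add_right add_divide_distrib scaleR_add_left)
    moreover have "of_int k + 1 \<le> H" using k(2) Hi by (simp flip: of_int_le_iff[where 'a=real])
    ultimately show ?thesis
      using k(1) \<open>0 < Hi\<close> Hi mem_convex_hull_triangle_scaled[where H=H and k="of_int k"] by simp
  qed
  ultimately show ?thesis by (rule that)
qed

lemma convex_hull_facet_lattice_edge:
  fixes X :: "(real^2) set"
  assumes "finite X" "X \<subseteq> lattice2" "aff_dim X = 2"
    and C: "C facet_of convex hull X" "a \<noteq> 0" "convex hull X \<subseteq> {x. inner a x \<le> b}"
      "C = convex hull X \<inter> {x. inner a x = b}"
  obtains c e L l where "c \<in> lattice2" "e \<in> lattice2" "inner c e = 1" "L \<in> X"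
    "L + perp c \<in> convex hull X" "0 < l" "a = l *\<^sub>R c" "b = l * inner c L"
proof -
  have "C face_of convex hull X" using C(1) by (rule facet_of_imp_face_of)
  then obtain T where T: "T \<subseteq> X" "C = convex hull T"
    using face_of_convex_hull_subset[OF finite_imp_compact[OF assms(1)]] by blast
  have "aff_dim C = 1" using C(1) assms(3) by (simp add: facet_of_def aff_dim_convex_hull)
  have "\<exists>L0\<in>T. \<exists>M0\<in>T. L0 \<noteq> M0"
  proof (rule ccontr)
    assume "\<not> ?thesis"
    then have "T = {} \<or> (\<exists>x. T = {x})" by blast
    then show False using \<open>aff_dim C = 1\<close> T(2) by auto
  qed
  then obtain L0 M0 where LM0: "L0 \<in> T" "M0 \<in> T" "L0 \<noteq> M0" by blast
  then have "L0 \<in> C" "M0 \<in> C" using T(2) hull_inc by auto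
  then have "inner a L0 = inner a M0" using C(4) by auto
  moreover have "L0 \<in> lattice2" "M0 \<in> lattice2" using LM0 T(1) assms(2) by auto
  ultimately obtain c e L M g l where LM: "{L, M} = {L0, M0}" and ce: "c \<in> lattice2" "e \<in> lattice2"
      "inner c e = 1" and g: "1 \<le> g" "M = L + g *\<^sub>R perp c" and l: "0 < l" "a = l *\<^sub>R c"
    using lattice2_edge_primitive_normal[of L0 M0 a] LM0(3) C(2) by metis
  have "L \<in> X" "M \<in> X" "L \<in> C" using LM LM0 T(1) \<open>L0 \<in> C\<close> \<open>M0 \<in> C\<close> by (auto simp: doubleton_eq_iff)
  have "L + perp c = (1 - 1 / g) *\<^sub>R L + (1 / g) *\<^sub>R M" using g by (simp add: algebra_simps)
  then have "L + perp c \<in> closed_segment L M" using g by (auto simp: closed_segment_def)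
  also have "\<dots> \<subseteq> convex hull X"
    using \<open>L \<in> X\<close> \<open>M \<in> X\<close> by (simp add: segment_convex_hull hull_mono)
  finally have "L + perp c \<in> convex hull X" .
  moreover have "b = l * inner c L" using \<open>L \<in> C\<close> C(4) l(2) by simp
  ultimately show ?thesis using that ce \<open>L \<in> X\<close> l by blast
qed

section \<open>Dominating lattice points\<close>

lemma cball_subset_halfspace_margin:
  fixes c :: "'a::euclidean_space"
  assumes "cball p \<rho> \<subseteq> {x. inner c x \<le> \<beta>}" "0 \<le> \<rho>"
  shows "inner c p + \<rho> * norm c \<le> \<beta>"
proof (cases "c = 0")
  case True
  have "p \<in> {x. inner c x \<le> \<beta>}" using assms centre_in_cball[of p \<rho>] by blast
  then show ?thesis using True by (simp split: if_splits)
next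
  case False
  define q where "q = p + (\<rho> / norm c) *\<^sub>R c"
  have "q \<in> cball p \<rho>" using False assms(2) by (simp add: q_def dist_norm)
  moreover have "inner c q = inner c p + \<rho> * norm c"
    using False by (simp add: q_def inner_add_right power2_norm_eq_inner[symmetric] power2_eq_square)
  ultimately show ?thesis using assms(1) by auto
qed

lemma norm_le_beyond_supporting_halfspace:
  fixes c p z :: "'a::euclidean_space"
  assumes "cball p \<rho> \<subseteq> K" "0 < \<rho>" "K \<subseteq> cball p D" "K \<subseteq> {x. inner c x \<le> \<beta>}" "1 \<le> norm c"
    and t: "0 < t" "p + t *\<^sub>R (z - p) \<in> K" "inner c (p + t *\<^sub>R (z - p)) = \<beta>"
    and "\<beta> \<le> inner c z"
  shows "norm (z - p) \<le> D / \<rho> * (inner c z - \<beta>) + D"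
proof -
  define \<delta> where "\<delta> = \<beta> - inner c p"
  have "inner c p + \<rho> * norm c \<le> \<beta>"
    using assms(1,2,4) by (intro cball_subset_halfspace_margin) auto
  moreover have "\<rho> \<le> \<rho> * norm c" using assms(2,5) by simp
  ultimately have "\<rho> \<le> \<delta>" unfolding \<delta>_def by linarith
  have "t * (inner c z - inner c p) = \<delta>"
    using t(3) by (simp add: \<delta>_def inner_add_right inner_diff_right algebra_simps)
  have tn: "t * norm (z - p) \<le> D"
    using t(1,2) assms(3) by (auto simp: dist_norm norm_minus_commute)
  have "0 \<le> D" using tn t(1) by (meson less_imp_le mult_nonneg_nonneg norm_ge_zero order_trans)
  have "norm (z - p) = norm (z - p) * (t * (inner c z - inner c p)) / \<delta>"
    using \<open>t * (inner c z - inner c p) = \<delta>\<close> \<open>\<rho> \<le> \<delta>\<close> assms(2) by simp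
  also have "\<dots> = t * norm (z - p) * ((inner c z - inner c p) / \<delta>)" by simp
  also have "\<dots> \<le> D * ((inner c z - inner c p) / \<delta>)"
    using tn \<open>\<rho> \<le> \<delta>\<close> assms(2,9) \<open>0 \<le> D\<close> by (intro mult_right_mono) (auto simp: \<delta>_def)
  also have "\<dots> = D / \<delta> * (inner c z - \<beta>) + D"
    using \<open>\<rho> \<le> \<delta>\<close> assms(2) by (simp add: \<delta>_def field_simps)
  also have "\<dots> \<le> D / \<rho> * (inner c z - \<beta>) + D"
    using \<open>\<rho> \<le> \<delta>\<close> assms(2,9) \<open>0 \<le> D\<close> by (intro add_right_mono mult_right_mono divide_left_mono) auto
  finally show ?thesis .
qed

lemma norm_diff_le_in_triangle:
  fixes z L M p c :: "'a::real_inner"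
  assumes "w \<in> convex hull {z, L, M}" "inner c M = inner c L" "inner c w = inner c L + 1"
    and "norm (z - p) \<le> A * (inner c z - inner c L) + D" "norm (L - p) \<le> D" "norm (M - p) \<le> D"
  shows "norm (w - p) \<le> A + D"
proof -
  obtain u v s where uvs: "0 \<le> u" "0 \<le> v" "0 \<le> s" "u + v + s = 1"
    and w: "w = u *\<^sub>R z + v *\<^sub>R L + s *\<^sub>R M"
    using assms(1) unfolding convex_hull_3 by blast
  have s: "s = 1 - u - v" using uvs(4) by simp
  have "inner c w = u * inner c z + (1 - u) * inner c L"
    unfolding w s using assms(2) by (simp add: inner_add_right algebra_simps)
  then have u: "u * (inner c z - inner c L) = 1" using assms(3) by (simp add: algebra_simps)
  have "w - p = u *\<^sub>R (z - p) + v *\<^sub>R (L - p) + s *\<^sub>R (M - p)"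
    unfolding w s by (simp add: algebra_simps)
  then have "norm (w - p) \<le> norm (u *\<^sub>R (z - p)) + norm (v *\<^sub>R (L - p)) + norm (s *\<^sub>R (M - p))"
    by (metis norm_triangle_le norm_triangle_ineq add_right_mono)
  also have "\<dots> = u * norm (z - p) + v * norm (L - p) + s * norm (M - p)"
    using uvs by simp
  also have "\<dots> \<le> u * (A * (inner c z - inner c L) + D) + v * D + s * D"
    using uvs assms(4-6) by (intro add_mono mult_left_mono) auto
  also have "\<dots> = A * (u * (inner c z - inner c L)) + (u + v + s) * D" by (simp add: algebra_simps)
  finally show ?thesis using u uvs(4) by simp
qed

lemma dominated_lattice_point_near:
  fixes X :: "(real^2) set"
  assumes X: "finite X" "X \<subseteq> lattice2" "aff_dim X = 2" "lattice_convex X"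
    and K: "cball p \<rho> \<subseteq> convex hull X" "0 < \<rho>" "convex hull X \<subseteq> cball p D"
    and z: "z \<in> lattice2" "z \<notin> X"
  obtains w where "w \<in> lattice2" "w \<notin> X" "w \<in> convex hull (insert z X)" "norm (w - p) \<le> D / \<rho> + D"
proof -
  define K where "K = convex hull X"
  have "polyhedron K" unfolding K_def using X(1) by (intro polytope_imp_polyhedron) (auto simp: polytope_def)
  moreover have "p \<in> interior K"
    using K(1,2) interior_mono[of "cball p \<rho>" K] by (auto simp: K_def)
  moreover have "z \<notin> K" using X(4) z unfolding lattice_convex_def K_def by blast
  ultimately obtain C a b t where C: "C facet_of K" "a \<noteq> 0" "K \<subseteq> {x. inner a x \<le> b}"
      "C = K \<inter> {x. inner a x = b}" and t: "0 < t" "p + t *\<^sub>R (z - p) \<in> C" and "b < inner a z"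
    by (rule polyhedron_exit_facet)
  obtain c e L l where ce: "c \<in> lattice2" "e \<in> lattice2" "inner c e = 1" and L: "L \<in> X"
      "L + perp c \<in> K" and l: "0 < l" "a = l *\<^sub>R c" "b = l * inner c L"
    using convex_hull_facet_lattice_edge[OF X(1-3) C[unfolded K_def]] unfolding K_def by blast
  define \<beta> where "\<beta> = inner c L"
  have Kc: "K \<subseteq> {x. inner c x \<le> \<beta>}" using C(3) l by (auto simp: \<beta>_def)
  have "\<beta> < inner c z" using \<open>b < inner a z\<close> l by (simp add: \<beta>_def)
  have "inner c (p + t *\<^sub>R (z - p)) = \<beta>" using t(2) C(4) l by (simp add: \<beta>_def)
  obtain w where w: "w \<in> lattice2" "inner c w = \<beta> + 1" "w \<in> convex hull {z, L, L + perp c}"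
    using lattice2_point_next_layer[OF ce _ z(1)] L(1) X(2) \<open>\<beta> < inner c z\<close> unfolding \<beta>_def by blast
  have "w \<notin> X" using w(2) Kc hull_inc[of w X] by (force simp: K_def)
  have "convex hull {z, L, L + perp c} \<subseteq> convex hull (insert z X)"
    using L hull_mono[of X "insert z X"] hull_inc[of _ "insert z X"]
    by (intro hull_minimal) (auto simp: K_def)
  then have "w \<in> convex hull (insert z X)" using w(3) by blast
  moreover have "norm (w - p) \<le> D / \<rho> + D"
  proof (rule norm_diff_le_in_triangle[OF w(3)])
    have "1 \<le> norm c" using ce norm_ge_1_lattice2 by force
    then show "norm (z - p) \<le> D / \<rho> * (inner c z - inner c L) + D"
      using norm_le_beyond_supporting_halfspace[OF K(1)[folded K_def] K(2) K(3)[folded K_def] Kc _ t(1)]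
        t(2) C(4) \<open>inner c (p + t *\<^sub>R (z - p)) = \<beta>\<close> \<open>\<beta> < inner c z\<close> by (auto simp: \<beta>_def)
    have "L \<in> cball p D" "L + perp c \<in> cball p D"
      using L K(3) hull_subset[of X convex] by (auto simp: K_def)
    then show "norm (L - p) \<le> D" "norm (L + perp c - p) \<le> D"
      by (simp_all add: dist_norm norm_minus_commute)
  qed (use w(2) in \<open>simp_all add: \<beta>_def inner_add_right\<close>)
  ultimately show ?thesis using that w(1) \<open>w \<notin> X\<close> by blast
qed

lemma lattice_convex_dominating_bound:
  fixes X :: "(real^2) set"
  assumes "finite X" "X \<subseteq> lattice2" "aff_dim X = 2" "lattice_convex X"
  obtains R where "\<And>z. z \<in> lattice2 \<Longrightarrow> z \<notin> X \<Longrightarrow>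
    \<exists>w. w \<in> lattice2 \<and> w \<notin> X \<and> w \<in> convex hull (insert z X) \<and> norm w \<le> R"
proof -
  obtain p where "p \<in> interior (convex hull X)" using interior_convex_hull_nonempty[OF assms(3)] by blast
  then obtain \<rho> where \<rho>: "0 < \<rho>" "cball p \<rho> \<subseteq> convex hull X" using mem_interior_cball by blast
  define D where "D = Max ((\<lambda>x. norm (x - p)) ` X)"
  have "X \<subseteq> cball p D" using assms(1) by (auto simp: D_def dist_norm norm_minus_commute intro!: Max_ge)
  then have "convex hull X \<subseteq> cball p D" by (simp add: hull_minimal)
  show ?thesis
  proof (rule that[of "norm p + (D / \<rho> + D)"])
    fix z assume "z \<in> lattice2" "z \<notin> X"
    then obtain w where "w \<in> lattice2" "w \<notin> X" "w \<in> convex hull (insert z X)" "norm (w - p) \<le> D / \<rho> + D"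
      using dominated_lattice_point_near[OF assms \<rho>(2,1) \<open>convex hull X \<subseteq> cball p D\<close>] by blast
    moreover have "norm w \<le> norm p + norm (w - p)" using norm_triangle_sub[of w p] by simp
    ultimately show "\<exists>w. w \<in> lattice2 \<and> w \<notin> X \<and> w \<in> convex hull (insert z X) \<and> norm w \<le> norm p + (D / \<rho> + D)"
      by force
  qed
qed

section \<open>Relaxation complexity and hiding sets\<close>

lemma rc_le_card_facets:
  assumes "polyhedron P" "P \<inter> lattice2 = X"
  shows "rc X \<le> card {F. F facet_of P}"
  unfolding rc_def using assms by (intro Least_le) blast

lemma rc_attained:
  assumes "polyhedron P0" "P0 \<inter> lattice2 = X"
  obtains P where "polyhedron P" "P \<inter> lattice2 = X" "card {F. F facet_of P} = rc X"
proof -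
  have "\<exists>k P. polyhedron P \<and> P \<inter> lattice2 = X \<and> card {F. F facet_of P} = k" using assms by blast
  then have "\<exists>P. polyhedron P \<and> P \<inter> lattice2 = X \<and> card {F. F facet_of P} = rc X"
    unfolding rc_def by (rule LeastI_ex)
  then show ?thesis using that by blast
qed

lemma card_le_hiding_number:
  assumes "hiding_set X H" "finite H"
  shows "enat (card H) \<le> hiding_number X"
proof -
  have "(if finite H then enat (card H) else \<infinity>) \<le> hiding_number X"
    unfolding hiding_number_def using assms(1) by (intro SUP_upper) simp
  then show ?thesis using assms(2) by simp
qed

lemma hiding_number_le_rc:
  fixes X :: "(real^2) set"
  assumes "finite X" "aff_dim X = 2" "lattice_convex X"
  shows "hiding_number X \<le> enat (rc X)"
proof -
  have "polyhedron (convex hull X)"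
    using assms(1) by (intro polytope_imp_polyhedron) (auto simp: polytope_def)
  moreover have "convex hull X \<inter> lattice2 = X" using assms(3) by (simp add: lattice_convex_def)
  ultimately obtain P where P: "polyhedron P" "P \<inter> lattice2 = X" "card {F. F facet_of P} = rc X"
    by (rule rc_attained)
  show ?thesis
    unfolding hiding_number_def
  proof (rule SUP_least)
    fix H assume "H \<in> {H. hiding_set X H}"
    then have "finite H \<and> card H \<le> rc X"
      using card_hiding_set_le_facets[OF P(1,2)] interior_convex_hull_nonempty[OF assms(2)] P(3) by auto
    then show "(if finite H then enat (card H) else \<infinity>) \<le> enat (rc X)" by simp
  qed
qed

definition supporting_halfplane :: "(real^2) set \<Rightarrow> real \<Rightarrow> (real^2) set" where
  "supporting_halfplane X t = {x. inner (dir t) x \<le> Max ((\<lambda>y. inner (dir t) y) ` X)}"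

lemma rc_le_card_separating_angles:
  fixes X :: "(real^2) set"
  assumes "finite X" "X \<subseteq> lattice2" "X \<noteq> {}" "finite U"
    and sep: "\<And>w. w \<in> lattice2 \<Longrightarrow> w \<notin> X \<Longrightarrow> \<exists>t\<in>U. dir_separates X w t"
  shows "rc X \<le> card U"
proof -
  define P where "P = \<Inter> (supporting_halfplane X ` U)"
  have halfplane: "\<exists>a b. a \<noteq> 0 \<and> h = {x. inner a x \<le> b}" if h: "h \<in> supporting_halfplane X ` U" for h
  proof -
    obtain t where "h = supporting_halfplane X t" using h by blast
    moreover have "dir t \<noteq> 0" using norm_dir[of t] by (metis norm_zero zero_neq_one)
    ultimately show ?thesis unfolding supporting_halfplane_def by blast
  qed
  have "polyhedron P"
    unfolding P_def using assms(4)
    by (intro polyhedron_Inter) (auto simp: supporting_halfplane_def polyhedron_halfspace_le)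
  have X_sub: "X \<subseteq> supporting_halfplane X t" for t
    using assms(1) by (auto simp: supporting_halfplane_def)
  have "P \<inter> lattice2 = X"
  proof
    show "P \<inter> lattice2 \<subseteq> X"
    proof (rule subsetI, rule ccontr)
      fix y assume y: "y \<in> P \<inter> lattice2" "y \<notin> X"
      then obtain t where "t \<in> U" "dir_separates X y t" using sep by blast
      moreover have "Max ((\<lambda>x. inner (dir t) x) ` X) \<in> (\<lambda>x. inner (dir t) x) ` X"
        using assms(1,3) by simp
      then obtain x0 where "x0 \<in> X" "Max ((\<lambda>x. inner (dir t) x) ` X) = inner (dir t) x0" by auto
      moreover have "y \<in> supporting_halfplane X t" using y(1) \<open>t \<in> U\<close> by (auto simp: P_def)
      ultimately show False by (auto simp: supporting_halfplane_def dir_separates_def)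
    qed
  qed (use X_sub assms(2) in \<open>auto simp: P_def\<close>)
  have "P = affine hull P \<inter> \<Inter> (supporting_halfplane X ` U)"
    using hull_subset[of P affine] by (auto simp: P_def)
  then have "card {F. F facet_of P} \<le> card (supporting_halfplane X ` U)"
    using assms(4) halfplane by (intro card_facets_le_card_halfspaces) auto
  also have "\<dots> \<le> card U" using assms(4) by (rule card_image_le)
  finally show ?thesis using rc_le_card_facets[OF \<open>polyhedron P\<close> \<open>P \<inter> lattice2 = X\<close>] by simp
qed

lemma hiding_set_if_separating_angles_disjoint:
  fixes X :: "(real^2) set"
  assumes "finite X" "aff_dim X = 2" "Z \<subseteq> lattice2 - X"
    and not0: "\<And>z. z \<in> Z \<Longrightarrow> \<not> dir_separates X z 0"
    and disj: "pairwise (\<lambda>v w. disjnt (separating_angles X v) (separating_angles X w)) Z"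
  shows "hiding_set X Z"
  unfolding hiding_set_def
proof (intro conjI ballI impI)
  show "Z \<subseteq> affine hull X \<inter> lattice2 - X"
    using assms(2,3) aff_dim_eq_full[of X] by simp
next
  fix z w assume zw: "z \<in> Z" "w \<in> Z" "z \<noteq> w"
  show "closed_segment z w \<inter> convex hull X \<noteq> {}"
  proof
    assume "closed_segment z w \<inter> convex hull X = {}"
    then have "convex hull X \<inter> closed_segment z w = {}" by blast
    moreover have "closed (convex hull X)" "convex hull X \<noteq> {}"
      using assms(1,2) by (auto simp: finite_imp_compact_convex_hull compact_imp_closed)
    moreover have "closed_segment z w \<noteq> {}" by auto
    ultimately obtain t where t: "0 \<le> t" "t < 2 * pi"
      and sep: "\<And>x y. x \<in> convex hull X \<Longrightarrow> y \<in> closed_segment z w \<Longrightarrow> inner (dir t) x < inner (dir t) y"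
      using exists_dir_separating[OF convex_convex_hull _ _ convex_closed_segment compact_segment]
      by blast
    have "dir_separates X z t" "dir_separates X w t"
      using sep hull_subset[of X convex] by (auto simp: dir_separates_def)
    moreover have "t \<noteq> 0" using not0[OF zw(1)] \<open>dir_separates X z t\<close> by auto
    ultimately have "t \<in> separating_angles X z" "t \<in> separating_angles X w"
      using t by (auto simp: separating_angles_def)
    then show False using disj zw by (auto simp: pairwise_def disjnt_def)
  qed
qed

lemma rc_le_card_hiding_set_plus_1:
  fixes X :: "(real^2) set"
  assumes "finite X" "X \<subseteq> lattice2" "aff_dim X = 2" "lattice_convex X"
  obtains Z where "hiding_set X Z" "finite Z" "rc X \<le> card Z + 1"
proof -
  obtain R where dom: "\<And>z. z \<in> lattice2 \<Longrightarrow> z \<notin> X \<Longrightarrow>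
      \<exists>w. w \<in> lattice2 \<and> w \<notin> X \<and> w \<in> convex hull (insert z X) \<and> norm w \<le> R"
    using lattice_convex_dominating_bound[OF assms] by blast
  define W where "W = {w \<in> lattice2. norm w \<le> R} \<inter> {w. w \<notin> X \<and> \<not> dir_separates X w 0}"
  have "finite W" unfolding W_def using finite_lattice2_norm_le by blast
  have "X \<noteq> {}" using assms(3) by auto
  have "open (separating_angles X w) \<and> is_interval (separating_angles X w)
      \<and> bounded (separating_angles X w) \<and> separating_angles X w \<noteq> {}" if "w \<in> W" for w
    using that assms(4) by (intro separating_angles_open_interval[OF assms(1)])
      (auto simp: W_def lattice_convex_def)
  then obtain T D where TD: "finite T" "D \<subseteq> W" "card T \<le> card D"
    and disj: "pairwise (\<lambda>v w. disjnt (separating_angles X v) (separating_angles X w)) D"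
    and pierce: "\<forall>w\<in>W. separating_angles X w \<inter> T \<noteq> {}"
    using interval_piercing_le_packing[OF \<open>finite W\<close>, of "separating_angles X"] by blast
  have "hiding_set X D"
    using TD(2) disj by (intro hiding_set_if_separating_angles_disjoint[OF assms(1,3)]) (auto simp: W_def)
  \<comment> \<open>cutting the circle of directions at angle \<open>0\<close> made the separating arcs intervals;
    the direction \<open>0\<close> itself is paid for by the extra facet\<close>
  have "rc X \<le> card (insert 0 T)"
  proof (rule rc_le_card_separating_angles[OF assms(1,2) \<open>X \<noteq> {}\<close>])
    show "finite (insert 0 T)" using TD(1) by simp
  next
    fix z assume "z \<in> lattice2" "z \<notin> X"
    then obtain w where w: "w \<in> lattice2" "w \<notin> X" "w \<in> convex hull (insert z X)" "norm w \<le> R"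
      using dom by blast
    have "\<exists>t\<in>insert 0 T. dir_separates X w t"
    proof (cases "dir_separates X w 0")
      case False
      then have "w \<in> W" using w by (simp add: W_def)
      then show ?thesis using pierce by (auto simp: separating_angles_def)
    qed simp
    then show "\<exists>t\<in>insert 0 T. dir_separates X z t"
      using dir_separates_if_dominated[OF assms(1) w(3)] by blast
  qed
  also have "\<dots> \<le> card D + 1" using TD(1,3) by (simp add: card_insert_if)
  finally show ?thesis
    using that \<open>hiding_set X D\<close> TD(2) \<open>finite W\<close> finite_subset by blast
qed

theorem theorem4p6:
  fixes X :: "(real^2) set"
  assumes "finite X" and "X \<subseteq> lattice2" and "aff_dim X = 2" and "lattice_convex X"
  shows "hiding_number X \<le> enat (rc X) \<and> enat (rc X) \<le> hiding_number X + 1"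
proof
  show "hiding_number X \<le> enat (rc X)" using hiding_number_le_rc assms(1,3,4) .
  obtain Z where "hiding_set X Z" "finite Z" "rc X \<le> card Z + 1"
    using rc_le_card_hiding_set_plus_1[OF assms] .
  then have "enat (rc X) \<le> enat (card Z) + 1" by (simp add: one_enat_def)
  also have "\<dots> \<le> hiding_number X + 1"
    using card_le_hiding_number[OF \<open>hiding_set X Z\<close> \<open>finite Z\<close>] by (rule add_right_mono)
  finally show "enat (rc X) \<le> hiding_number X + 1" .
qed

end
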